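(* Let $n\ge1$ and let $x_1,\dots,x_n$ and $y_1,\dots,y_n$ be Boolean values. Define Boolean values $a_1,\dots,a_{n-1}$ and $d_1,\dots,d_n$ inductively by $a_1\Leftrightarrow(x_1\ge y_1)$; $a_{i+1}\Leftrightarrow(a_i\wedge x_{i+1}\ge y_{i+1})$ for $1\le i\le n-2$; $d_1\Leftrightarrow(y_1\ge x_1)$; $d_{i+1}\Leftrightarrow(d_i\wedge(\bar a_i\vee y_{i+1}\ge x_{i+1}))$ for $1\le i\le n-1$. Then $d_n$ holds if and only if $(x_1,\dots,x_n)\le_{\mathrm{lex}}(y_1,\dots,y_n)$.
   Context: Boolean values are $0$ (false) and $1$ (true), with $0<1$; $\bar a=1-a$. The lexicographic order on $\{0,1\}^n$: $(x_1,\dots,x_n)\le_{\mathrm{lex}}(y_1,\dots,y_n)$ iff the tuples are equal or, at the first index $i$ where they differ, $x_i<y_i$ (equivalently $\sum_{i=1}^n 2^{n-i}x_i\le\sum_{i=1}^n 2^{n-i}y_i$). *)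

theory Defs
  imports Main
begin

text \<open>Boolean tuples (x_1,...,x_n) are functions nat => bool read on indices 1..n;
  bool is ordered with False < True.\<close>

definition lex_le :: "nat \<Rightarrow> (nat \<Rightarrow> bool) \<Rightarrow> (nat \<Rightarrow> bool) \<Rightarrow> bool" where
  "lex_le n x y \<longleftrightarrow>
     (\<forall>i\<in>{1..n}. x i = y i) \<or>
     (\<exists>i\<in>{1..n}. (\<forall>j\<in>{1..<i}. x j = y j) \<and> x i < y i)"

end

theory Submission
  imports Defs
begin

text \<open>By induction on i: a_i says that x_j \<ge> y_j for all j \<le> i, and d_i says that
  (x_1,...,x_i) \<le>lex (y_1,...,y_i).  The step for d uses that the lexicographic order
  on prefixes of length i+1 only consults x_{i+1} \<le> y_{i+1} when the prefixes of
  length i agree, and that, once (x_1,...,x_i) \<le>lex (y_1,...,y_i) holds, they agree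
  exactly when x_j \<ge> y_j for all j \<le> i, i.e. when a_i holds.\<close>

lemma lex_le_0: "lex_le 0 x y"
  by (simp add: lex_le_def)

lemma lex_le_Suc:
  "lex_le (Suc n) x y \<longleftrightarrow>
     lex_le n x y \<and> ((\<forall>i\<in>{1..n}. x i = y i) \<longrightarrow> x (Suc n) \<le> y (Suc n))"
proof
  assume "lex_le (Suc n) x y"
  then consider "\<forall>i\<in>{1..Suc n}. x i = y i"
    | k where "k \<in> {1..Suc n}" "\<forall>j\<in>{1..<k}. x j = y j" "x k < y k"
    unfolding lex_le_def by blast
  then show "lex_le n x y \<and> ((\<forall>i\<in>{1..n}. x i = y i) \<longrightarrow> x (Suc n) \<le> y (Suc n))"
  proof cases
    case 1
    then show ?thesis by (simp add: lex_le_def)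
  next
    case (2 k)
    show ?thesis
    proof (cases "k = Suc n")
      case True
      with 2 show ?thesis by (auto simp: lex_le_def less_Suc_eq_le)
    next
      case False
      with 2 have "k \<in> {1..n}" by auto
      moreover have "x k \<noteq> y k" using \<open>x k < y k\<close> by auto
      ultimately show ?thesis using 2 unfolding lex_le_def by blast
    qed
  qed
next
  assume asm: "lex_le n x y \<and> ((\<forall>i\<in>{1..n}. x i = y i) \<longrightarrow> x (Suc n) \<le> y (Suc n))"
  show "lex_le (Suc n) x y"
  proof (cases "\<forall>i\<in>{1..n}. x i = y i")
    case True
    with asm have "x (Suc n) \<le> y (Suc n)" by blast
    then consider "x (Suc n) = y (Suc n)" | "x (Suc n) < y (Suc n)" by fastforce
    then show ?thesis
    proof cases
      case 1
      with True show ?thesis by (auto simp: lex_le_def le_Suc_eq)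
    next
      case 2
      with True show ?thesis unfolding lex_le_def by (auto intro!: bexI[of _ "Suc n"])
    qed
  next
    case False
    with asm obtain k where "k \<in> {1..n}" "\<forall>j\<in>{1..<k}. x j = y j" "x k < y k"
      unfolding lex_le_def by blast
    then show ?thesis unfolding lex_le_def by (auto intro!: bexI[of _ k])
  qed
qed

lemma lex_le_imp_ge_iff_eq:
  assumes "lex_le n x y"
  shows "(\<forall>i\<in>{1..n}. y i \<le> x i) \<longleftrightarrow> (\<forall>i\<in>{1..n}. x i = y i)"
  using assms unfolding lex_le_def by auto
theorem lemma11:
  fixes n :: nat and x y a d :: "nat \<Rightarrow> bool"
  assumes "n \<ge> 1"
    and "a 1 = (x 1 \<ge> y 1)"
    and "\<forall>i. 1 \<le> i \<and> i \<le> n - 2 \<longrightarrow> a (i + 1) = (a i \<and> x (i + 1) \<ge> y (i + 1))"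
    and "d 1 = (y 1 \<ge> x 1)"
    and "\<forall>i. 1 \<le> i \<and> i \<le> n - 1 \<longrightarrow> d (i + 1) = (d i \<and> (\<not> a i \<or> y (i + 1) \<ge> x (i + 1)))"
  shows "d n \<longleftrightarrow> lex_le n x y"
proof -
  have a_iff: "a i \<longleftrightarrow> (\<forall>j\<in>{1..i}. y j \<le> x j)" if "1 \<le> i" "i \<le> n - 1" for i
    using that
  proof (induction i rule: nat_induct_at_least)
    case base
    then show ?case using assms(2) by simp
  next
    case (Suc i)
    then have "a (Suc i) \<longleftrightarrow> a i \<and> y (Suc i) \<le> x (Suc i)"
      using assms(3) by simp
    with Suc show ?case by (auto simp: le_Suc_eq)
  qed
  have d_iff: "d i \<longleftrightarrow> lex_le i x y" if "1 \<le> i" "i \<le> n" for i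
    using that
  proof (induction i rule: nat_induct_at_least)
    case base
    then show ?case using assms(4) lex_le_Suc[of 0] lex_le_0 by simp
  next
    case (Suc i)
    then have "d (Suc i) \<longleftrightarrow> d i \<and> (\<not> a i \<or> x (Suc i) \<le> y (Suc i))"
      using assms(5) by simp
    with Suc a_iff[of i] show ?case
      using lex_le_Suc[of i] lex_le_imp_ge_iff_eq[of i] by auto
  qed
  show ?thesis using d_iff[of n] assms(1) by simp
qed

end
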